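(* Let $k$ be odd, $n=4k$, $d=\frac{(3^{2k}+1)^2}{20}$, $\alpha$ a primitive element of $\mathrm{GF}(3^n)$, $s_t=\mathrm{Tr}_1^n(\alpha^t)$, and for $0\le\tau\le 3^n-2$ let $C_d(\tau)=\sum_{t=0}^{3^n-2}\omega^{s_{t+\tau}-s_{dt}}$. Put $a=\alpha^\tau$ and let $r$ be a nonsquare in $\mathrm{GF}(3^4)$ (viewed inside $\mathrm{GF}(3^n)$). Then $$C_d(\tau)=-1+S_d(\tau),\qquad S_d(\tau)=\sum_{x\in\mathrm{GF}(3^n)}\omega^{\mathrm{Tr}_1^n(ax-x^d)},$$ and $$2S_d(\tau)=\sum_{x\in\mathrm{GF}(3^n)}\omega^{q_1(x)}+\sum_{x\in\mathrm{GF}(3^n)}\omega^{q_2(x)},$$ where $$q_1(x)=\mathrm{Tr}_1^n\big(a x^{3^{2(k+1)}+1}-x^{3^{2k}+1}\big),\qquad q_2(x)=\mathrm{Tr}_1^n\big(a r x^{3^{2(k+1)}+1}-r^{d}x^{3^{2k}+1}\big).$$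
   Context: $\omega=e^{2\pi\sqrt{-1}/3}$. $\mathrm{Tr}_1^n(x)=x+x^3+\cdots+x^{3^{n-1}}$ is the absolute trace from $\mathrm{GF}(3^n)$ to $\mathrm{GF}(3)$, and values in $\mathrm{GF}(3)=\mathbb{Z}/3\mathbb{Z}$ are used as exponents of $\omega$. *)

theory Defs
  imports Complex_Main
begin

definition abs_tr :: "nat \<Rightarrow> 'a::field \<Rightarrow> 'a" where
  "abs_tr n x = (\<Sum>i<n. x ^ (3 ^ i))"

text \<open>Identification of the prime field GF(3) with Z/3Z = {0,1,2} (used as exponents of omega).\<close>
definition gf3_val :: "'a::field \<Rightarrow> nat" where
  "gf3_val y = (THE j. j < 3 \<and> y = of_nat j)"

definition omega :: complex where
  "omega = cis (2 * pi / 3)"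

definition primitive_elem :: "'a::field \<Rightarrow> bool" where
  "primitive_elem \<alpha> \<longleftrightarrow> (\<forall>y. y \<noteq> 0 \<longrightarrow> (\<exists>i::nat. y = \<alpha> ^ i))"

end

theory Submission
  imports Defs "HOL-Number_Theory.Number_Theory"
begin

(* Let F = GF(3^n), n = 4k with k odd, and Q = 3^(2k).  The proof has two independent parts.

   The trace takes values in GF(3), on which omega^(u - v) is an
   additive character, so each summand of C_d equals omega^Tr(a x - x^d) at x = alpha^t.  As t
   runs over 0 .. 3^n - 2, alpha^t runs over the nonzero elements, and x = 0 contributes 1.

   Write 3^(2(k+1)) + 1 = 2e with e prime to 3^n - 1,
   so x -> x^e permutes F; moreover (x^(2e))^d = x^(Q+1).  With f(y) = a y - y^d this turns
   q1(x) and q2(x) into Tr f(y^2) and Tr f(r y^2) for y = x^e.  Finally, for a nonsquare r the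
   maps z -> z^2 and z -> r z^2 together cover every nonzero element exactly twice.  That r,
   a nonsquare in GF(81), stays a nonsquare in F follows from (3^n - 1)/80 being odd. *)

lemma char_eq_3_if_card:
  assumes "card (UNIV :: 'a::{field,finite} set) = 3 ^ n"
  shows "CHAR('a) = 3"
proof -
  have "prime CHAR('a)"
    by (intro prime_CHAR_semidom finite_imp_CHAR_pos) simp
  moreover have "CHAR('a) dvd 3 ^ n"
    using CHAR_dvd_CARD[where 'a='a] assms by simp
  ultimately have "CHAR('a) dvd 3"
    using prime_dvd_power by blast
  then show ?thesis
    using \<open>prime CHAR('a)\<close> primes_dvd_imp_eq[of "CHAR('a)" 3] by simp
qed

lemma power_card_minus_one:
  fixes x :: "'a::{field,finite}"
  assumes "x \<noteq> 0"
  shows "x ^ (card (UNIV::'a set) - 1) = 1"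
proof -
  let ?U = "UNIV - {0::'a}"
  have "(\<Prod>y\<in>?U. y) = (\<Prod>y\<in>?U. x * y)"
    by (rule prod.reindex_bij_witness[of _ "\<lambda>y. y / x" "\<lambda>y. x * y", symmetric]) (use assms in auto)
  also have "\<dots> = x ^ card ?U * (\<Prod>y\<in>?U. y)"
    by (simp add: prod.distrib)
  finally show ?thesis
    by (simp add: card_Diff_singleton)
qed

lemma power_add_card_multiple:
  fixes x :: "'a::{field,finite}"
  assumes "m > 0"
  shows "x ^ (m + (card (UNIV::'a set) - 1) * c) = x ^ m"
  using assms power_card_minus_one[of x] by (cases "x = 0") (simp_all add: power_add power_mult)

lemma power_card:
  fixes x :: "'a::{field,finite}"
  shows "x ^ card (UNIV::'a set) = x"
  using power_add_card_multiple[of 1 x 1] finite_UNIV_card_ge_0[where 'a='a] by simp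

(* In characteristic 3 the Frobenius map, hence the trace, is additive. *)
lemma abs_tr_add:
  fixes x y :: "'a::field"
  assumes "CHAR('a) = 3"
  shows "abs_tr n (x + y) = abs_tr n x + abs_tr n y"
  unfolding abs_tr_def using assms by (simp add: freshmans_dream' sum.distrib)

lemma abs_tr_diff:
  fixes x y :: "'a::field"
  assumes "CHAR('a) = 3"
  shows "abs_tr n (x - y) = abs_tr n x - abs_tr n y"
  using abs_tr_add[OF assms, where x="x - y" and y=y] by (simp add: eq_diff_eq)

lemma abs_tr_cube:
  fixes x :: "'a::field"
  assumes "CHAR('a) = 3" and "x ^ 3 ^ n = x"
  shows "abs_tr n x ^ 3 = abs_tr n x"
proof -
  have "abs_tr n x ^ 3 = (\<Sum>i<n. x ^ 3 ^ Suc i)"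
    unfolding abs_tr_def using assms(1)
    by (simp add: freshmans_dream_sum'[where n=1] mult.commute flip: power_mult)
  also have "\<dots> = (\<Sum>i<Suc n. x ^ 3 ^ i) - x"
    by (simp add: sum.lessThan_Suc_shift del: sum.lessThan_Suc)
  also have "\<dots> = abs_tr n x"
    unfolding abs_tr_def using assms(2) by simp
  finally show ?thesis .
qed

lemma gf3_val_of_int:
  assumes "CHAR('a::field) = 3"
  shows "gf3_val (of_int m :: 'a) = nat (m mod 3)"
  unfolding gf3_val_def
proof (rule the_equality)
  have "(of_int m :: 'a) = of_int (m mod 3)"
    using assms by (simp add: of_int_eq_iff_cong_CHAR cong_def)
  then show "nat (m mod 3) < 3 \<and> (of_int m :: 'a) = of_nat (nat (m mod 3))"
    by simp
next
  fix j assume j: "j < 3 \<and> (of_int m :: 'a) = of_nat j"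
  then have "(of_int m :: 'a) = of_int (int j)"
    by simp
  then have "[m = int j] (mod 3)"
    using assms by (simp only: of_int_eq_iff_cong_CHAR) simp
  then show "j = nat (m mod 3)"
    using j by (simp add: cong_def)
qed

lemma gf3_elem_of_int:
  fixes z :: "'a::field"
  assumes "CHAR('a) = 3" and "z ^ 3 = z"
  shows "z = of_int (int (gf3_val z))"
proof -
  have "z * (z - 1) * (z + 1) = 0"
    using assms(2) by (simp add: power3_eq_cube algebra_simps)
  then have "z = of_int 0 \<or> z = of_int 1 \<or> z = of_int (-1)"
    by (auto simp: eq_neg_iff_add_eq_0)
  then obtain i :: int where i: "z = of_int i"
    by blast
  have "(of_int i :: 'a) = of_int (i mod 3)"
    using assms(1) by (simp add: of_int_eq_iff_cong_CHAR cong_def)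
  then show ?thesis
    using i gf3_val_of_int[OF assms(1), of i] by simp
qed

lemma omega_cube: "omega ^ 3 = 1"
  unfolding omega_def DeMoivre by simp

lemma omega_powi_mod: "omega powi m = omega ^ nat (m mod 3)"
proof -
  have "omega \<noteq> 0"
    using omega_cube by auto
  have "omega powi m = omega powi (3 * (m div 3)) * omega powi (m mod 3)"
    using \<open>omega \<noteq> 0\<close> by (simp flip: power_int_add)
  also have "omega powi (3 * (m div 3)) = 1"
    by (simp add: power_int_mult omega_cube)
  finally show ?thesis
    by (simp add: power_int_def)
qed

lemma omega_gf3_diff:
  fixes u v :: "'a::field"
  assumes "CHAR('a) = 3" and "u ^ 3 = u" and "v ^ 3 = v"
  shows "omega powi (int (gf3_val u) - int (gf3_val v)) = omega ^ gf3_val (u - v)"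
proof -
  have "u - v = of_int (int (gf3_val u) - int (gf3_val v))"
    using gf3_elem_of_int[OF assms(1,2)] gf3_elem_of_int[OF assms(1,3)] by simp
  then have "gf3_val (u - v) = nat ((int (gf3_val u) - int (gf3_val v)) mod 3)"
    by (simp only: gf3_val_of_int[OF assms(1)])
  then show ?thesis
    by (simp add: omega_powi_mod)
qed

lemma primitive_elem_nonzero:
  fixes \<alpha> y :: "'a::field"
  assumes "primitive_elem \<alpha>" and "y \<noteq> 0" and "y \<noteq> 1"
  shows "\<alpha> \<noteq> 0"
proof
  assume "\<alpha> = 0"
  obtain i where "y = \<alpha> ^ i"
    using assms(1,2) unfolding primitive_elem_def by blast
  then show False
    using assms(2,3) \<open>\<alpha> = 0\<close> by (cases i) simp_all
qed

lemma primitive_elem_powers_bij: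
  fixes \<alpha> :: "'a::{field,finite}"
  assumes "primitive_elem \<alpha>" and "\<alpha> \<noteq> 0"
  shows "bij_betw (\<lambda>i. \<alpha> ^ i) {..<card (UNIV::'a set) - 1} (UNIV - {0})"
proof -
  let ?N = "card (UNIV::'a set) - 1"
  have "card {0, 1::'a} \<le> card (UNIV::'a set)"
    by (rule card_mono) simp_all
  then have "?N > 0"
    by simp
  have image: "(\<lambda>i. \<alpha> ^ i) ` {..<?N} = UNIV - {0}"
  proof
    show "(\<lambda>i. \<alpha> ^ i) ` {..<?N} \<subseteq> UNIV - {0}"
      using assms(2) by auto
    show "UNIV - {0} \<subseteq> (\<lambda>i. \<alpha> ^ i) ` {..<?N}"
    proof
      fix y :: 'a assume "y \<in> UNIV - {0}"
      then obtain i where "y = \<alpha> ^ i"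
        using assms(1) unfolding primitive_elem_def by blast
      also have "\<dots> = \<alpha> ^ (i mod ?N + ?N * (i div ?N))"
        by simp
      also have "\<dots> = \<alpha> ^ (i mod ?N)"
        using power_card_minus_one[OF assms(2)] by (simp only: power_add power_mult) simp
      finally show "y \<in> (\<lambda>i. \<alpha> ^ i) ` {..<?N}"
        using \<open>?N > 0\<close> by simp
    qed
  qed
  moreover have "card ((\<lambda>i. \<alpha> ^ i) ` {..<?N}) = card {..<?N}"
    unfolding image by (simp add: card_Diff_singleton)
  ultimately show ?thesis
    by (simp add: bij_betw_def eq_card_imp_inj_on)
qed

lemma sum_via_primitive_powers:
  fixes \<alpha> :: "'a::{field,finite}"
  assumes "primitive_elem \<alpha>" and "\<alpha> \<noteq> 0"
  shows "(\<Sum>x\<in>UNIV. G x) = G 0 + (\<Sum>i<card (UNIV::'a set) - 1. G (\<alpha> ^ i))"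
proof -
  have "(\<Sum>x\<in>UNIV. G x) = G 0 + (\<Sum>x\<in>UNIV - {0}. G x)"
    by (simp add: sum.remove[of UNIV 0])
  also have "(\<Sum>x\<in>UNIV - {0}. G x) = (\<Sum>i<card (UNIV::'a set) - 1. G (\<alpha> ^ i))"
    using sum.reindex_bij_betw[OF primitive_elem_powers_bij[OF assms], of G] by simp
  finally show ?thesis .
qed

lemma sum_lessThan_double_period:
  fixes f :: "nat \<Rightarrow> 'b::semiring_1"
  assumes "\<And>i. f (i + M) = f i"
  shows "(\<Sum>i<2 * M. f i) = 2 * (\<Sum>i<M. f i)"
proof -
  have "(\<Sum>i<2 * M. f i) = (\<Sum>i\<in>{0..<M}. f i) + (\<Sum>i\<in>{0 + M..<M + M}. f i)"
    using sum.atLeastLessThan_concat[of 0 M "M + M" f] by (simp add: mult_2 atLeast0LessThan)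
  also have "(\<Sum>i\<in>{0 + M..<M + M}. f i) = (\<Sum>i\<in>{0..<M}. f i)"
    by (simp only: sum.shift_bounds_nat_ivl assms)
  finally show ?thesis
    by (simp add: mult_2 atLeast0LessThan)
qed

lemma sum_squares_via_primitive:
  fixes \<alpha> :: "'a::{field,finite}" and G :: "'a \<Rightarrow> 'b::semiring_1"
  assumes "primitive_elem \<alpha>" and "\<alpha> \<noteq> 0" and "card (UNIV::'a set) - 1 = 2 * M"
  shows "(\<Sum>z\<in>UNIV. G (z\<^sup>2)) = G 0 + 2 * (\<Sum>i<M. G (\<alpha> ^ (2 * i)))"
proof -
  have "\<alpha> ^ (2 * M) = 1"
    using power_card_minus_one[OF assms(2)] assms(3) by simp
  then have period: "G (\<alpha> ^ (2 * (i + M))) = G (\<alpha> ^ (2 * i))" for i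
    by (simp add: algebra_simps power_add)
  show ?thesis
    using sum_via_primitive_powers[OF assms(1,2), of "\<lambda>z. G (z\<^sup>2)"] assms(3)
      sum_lessThan_double_period[of "\<lambda>i. G (\<alpha> ^ (2 * i))", OF period]
    by (simp add: mult.commute flip: power_mult)
qed

(* Here r = alpha^j with j odd, so r z^2 is a reindexing
   of alpha z^2, whose values are the odd powers of alpha. *)
lemma sum_square_classes:
  fixes \<alpha> r :: "'a::{field,finite}" and G :: "'a \<Rightarrow> 'b::comm_semiring_1"
  assumes "primitive_elem \<alpha>" and nonsquare: "\<not> (\<exists>y. y\<^sup>2 = r)"
  shows "(\<Sum>z\<in>UNIV. G (z\<^sup>2)) + (\<Sum>z\<in>UNIV. G (r * z\<^sup>2)) = 2 * (\<Sum>x\<in>UNIV. G x)"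
proof -
  let ?N = "card (UNIV::'a set) - 1"
  have "r \<noteq> 0" "r \<noteq> 1"
    using nonsquare by (metis power_zero_numeral, metis power_one)
  then have "\<alpha> \<noteq> 0"
    using primitive_elem_nonzero[OF assms(1)] by blast
  obtain j where r: "r = \<alpha> ^ j"
    using assms(1) \<open>r \<noteq> 0\<close> unfolding primitive_elem_def by blast
  have odd_exponent: "odd i" if "r = \<alpha> ^ i" for i
  proof
    assume "even i"
    then have "r = (\<alpha> ^ (i div 2))\<^sup>2"
      using that by (simp flip: power_mult)
    then show False
      using nonsquare by blast
  qed
  have "r = \<alpha> ^ (j + ?N)"
    using r power_card_minus_one[OF \<open>\<alpha> \<noteq> 0\<close>] by (simp add: power_add)
  then have "odd (j + ?N)"
    by (rule odd_exponent)
  then have "even ?N"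
    using odd_exponent[OF r] by simp
  then obtain M where M: "?N = 2 * M"
    by blast
  obtain c where c: "j = 2 * c + 1"
    using odd_exponent[OF r] oddE by blast
  have "(\<Sum>z\<in>UNIV. G (r * z\<^sup>2)) = (\<Sum>z\<in>UNIV. G (\<alpha> * (\<alpha> ^ c * z)\<^sup>2))"
    by (simp add: r c power_add algebra_simps flip: power_mult)
  also have "\<dots> = (\<Sum>z\<in>UNIV. G (\<alpha> * z\<^sup>2))"
    by (rule sum.reindex_bij_witness[of _ "\<lambda>z. z / \<alpha> ^ c" "\<lambda>z. \<alpha> ^ c * z"])
      (use \<open>\<alpha> \<noteq> 0\<close> in auto)
  also have "\<dots> = G 0 + 2 * (\<Sum>i<M. G (\<alpha> ^ (2 * i + 1)))"
    using sum_squares_via_primitive[OF assms(1) \<open>\<alpha> \<noteq> 0\<close> M, of "\<lambda>x. G (\<alpha> * x)"]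
    by simp
  finally have odd_part: "(\<Sum>z\<in>UNIV. G (r * z\<^sup>2)) = G 0 + 2 * (\<Sum>i<M. G (\<alpha> ^ (2 * i + 1)))" .
  have "(\<Sum>x\<in>UNIV. G x) = G 0 + (\<Sum>i<M * 2. G (\<alpha> ^ i))"
    using sum_via_primitive_powers[OF assms(1) \<open>\<alpha> \<noteq> 0\<close>] M by (simp add: mult.commute)
  also have "\<dots> = G 0 + (\<Sum>i<M. G (\<alpha> ^ (2 * i)) + G (\<alpha> ^ (2 * i + 1)))"
    by (simp flip: sum.nat_group add: algebra_simps)
  finally show ?thesis
    using sum_squares_via_primitive[OF assms(1) \<open>\<alpha> \<noteq> 0\<close> M, of G] odd_part
    by (simp add: sum.distrib algebra_simps mult_2_right)
qed

lemma sum_reindex_coprime_power: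
  fixes G :: "'a::{field,finite} \<Rightarrow> 'b::comm_monoid_add"
  assumes "e > 0" and "coprime e (card (UNIV::'a set) - 1)"
  shows "(\<Sum>x\<in>UNIV. G (x ^ e)) = (\<Sum>y\<in>UNIV. G y)"
proof -
  obtain u v where "e * u = (card (UNIV::'a set) - 1) * v + 1"
    using bezout_nat[of e "card (UNIV::'a set) - 1"] assms by auto
  then have "(y ^ u) ^ e = y" for y :: 'a
    using power_add_card_multiple[of 1 y v] by (simp add: mult.commute flip: power_mult)
  then have "surj (\<lambda>x::'a. x ^ e)"
    by (metis surjI)
  then have "bij (\<lambda>x::'a. x ^ e)"
    by (simp add: bij_def finite_UNIV_surj_inj)
  then show ?thesis
    by (rule sum.reindex_bij_betw)
qed

lemma power_gcd_eq_one:
  fixes x :: "'a::field"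
  assumes "x ^ a = 1" and "x ^ b = 1" and "a \<noteq> 0"
  shows "x ^ gcd a b = 1"
proof -
  obtain u v where "a * u = b * v + gcd a b"
    using bezout_nat[OF assms(3)] by blast
  then have "(x ^ a) ^ u = (x ^ b) ^ v * x ^ gcd a b"
    by (simp flip: power_mult power_add)
  then show ?thesis
    using assms(1,2) by simp
qed

(* If GF(81) sits in a field whose multiplicative group has order 80 m with m odd, an element of
   GF(81) without a square root in GF(81) has none in the whole field: a square root y would
   satisfy y^160 = 1 and y^(80 m) = 1, hence y^80 = 1, i.e. y would lie in GF(81). *)
lemma nonsquare_from_subfield:
  fixes r :: "'a::{field,finite}"
  assumes "card (UNIV::'a set) - 1 = 80 * m" and "odd m"
    and "r ^ 3 ^ 4 = r" and "\<not> (\<exists>y. y ^ 3 ^ 4 = y \<and> y\<^sup>2 = r)"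
  shows "\<not> (\<exists>y. y\<^sup>2 = r)"
proof
  assume "\<exists>y. y\<^sup>2 = r"
  then obtain y where y: "y\<^sup>2 = r" by blast
  have "y \<noteq> 0"
    using y assms(4) by force
  then have "r \<noteq> 0"
    using y by force
  then have "r ^ 80 = 1"
    using assms(3) by (simp add: power_add[of r 80 1, simplified])
  moreover have "y ^ 160 = (y\<^sup>2) ^ 80"
    by (simp flip: power_mult)
  ultimately have "y ^ 160 = 1"
    using y by simp
  moreover have "y ^ (80 * m) = 1"
    using power_card_minus_one[OF \<open>y \<noteq> 0\<close>] assms(1) by simp
  moreover have "gcd (160::nat) (80 * m) = 80 * gcd 2 m"
    using gcd_mult_distrib_nat[of 80 2 m] by simp
  moreover have "gcd 2 m = 1"
    using assms(2) coprime_left_2_iff_odd[of m] coprime_iff_gcd_eq_1 by blast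
  ultimately have "y ^ 80 = 1"
    using power_gcd_eq_one[of y 160 "80 * m"] by (simp only:) simp
  then have "y ^ 3 ^ 4 = y"
    by (simp add: power_add[of y 80 1, simplified])
  then show False
    using y assms(4) by blast
qed

lemma nine_power_odd:
  assumes "odd k"
  obtains z :: nat where "9 ^ k = 80 * z + 9"
proof -
  obtain j where k: "k = 2 * j + 1"
    using assms oddE by blast
  have "[(81::nat) ^ j = 1 ^ j] (mod 80)"
    by (rule cong_pow) (simp add: cong_def)
  then have "(9::nat) ^ k mod 80 = 9"
    by (simp add: k power_mult power_add cong_def mod_mult_right_eq[of 9 "81 ^ j" 80, symmetric])
  then show ?thesis
    using that by (metis mod_div_mult_eq mult.commute add.commute)
qed

lemma coprime_by_bezout:
  fixes a b x y :: int
  assumes "a * x + b * y = 1"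
  shows "coprime a b"
proof (rule coprimeI)
  fix c assume "c dvd a" "c dvd b"
  then have "c dvd a * x + b * y"
    by simp
  then show "is_unit c"
    using assms by simp
qed

lemma coprime_half_exponent:
  fixes z :: nat
  shows "coprime (360 * z + 41) (80 * (80 * z\<^sup>2 + 18 * z + 1))"
proof -
  have factor: "80 * (80 * z\<^sup>2 + 18 * z + 1) = 2 ^ 4 * 5 * ((8 * z + 1) * (10 * z + 1))"
    by (simp add: power2_eq_square algebra_simps)
  have "coprime (int (360 * z + 41)) (int (8 * z + 1))"
    by (rule coprime_by_bezout[of _ "2 * int z" _ "1 - 90 * int z"]) (simp add: algebra_simps)
  moreover have "coprime (int (360 * z + 41)) (int (10 * z + 1))"
    by (rule coprime_by_bezout[of _ "- 2 * int z" _ "1 + 72 * int z"]) (simp add: algebra_simps)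
  moreover have "coprime (int (360 * z + 41)) (int 2)"
    by (rule coprime_by_bezout[of _ 1 _ "- (180 * int z + 20)"]) (simp add: algebra_simps)
  moreover have "coprime (int (360 * z + 41)) (int 5)"
    by (rule coprime_by_bezout[of _ 1 _ "- (72 * int z + 8)"]) (simp add: algebra_simps)
  ultimately have "coprime (360 * z + 41) (8 * z + 1)" "coprime (360 * z + 41) (10 * z + 1)"
    "coprime (360 * z + 41) 2" "coprime (360 * z + 41) 5"
    by (simp_all only: coprime_int_iff)
  then show ?thesis
    unfolding factor by (simp only: coprime_mult_right_iff coprime_power_right_iff) simp
qed

lemma exponent_arithmetic:
  assumes "odd k" and "d = (3 ^ (2 * k) + 1)\<^sup>2 div 20"
  obtains e c m :: nat where
    "3 ^ (2 * (k + 1)) + 1 = 2 * e" and "coprime e (3 ^ (4 * k) - 1)"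
    and "(3 ^ (2 * (k + 1)) + 1) * d = 3 ^ (2 * k) + 1 + (3 ^ (4 * k) - 1) * c"
    and "3 ^ (4 * k) - 1 = 80 * m" and "odd m"
proof -
  obtain z :: nat where z: "9 ^ k = 80 * z + 9"
    using nine_power_odd[OF assms(1)] .
  have Q: "(3::nat) ^ (2 * k) = 80 * z + 9"
    using z by (simp add: power_mult)
  have E: "(3::nat) ^ (2 * (k + 1)) + 1 = 2 * (360 * z + 41)"
    using Q by (simp add: power_add)
  have "(3::nat) ^ (4 * k) = (3 ^ (2 * k))\<^sup>2"
    by (simp flip: power_mult)
  then have N: "(3::nat) ^ (4 * k) - 1 = 80 * (80 * z\<^sup>2 + 18 * z + 1)"
    using Q by (simp add: power2_eq_square algebra_simps)
  have d: "((3::nat) ^ (2 * k) + 1)\<^sup>2 div 20 = 320 * z\<^sup>2 + 80 * z + 5"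
  proof -
    have "((3::nat) ^ (2 * k) + 1)\<^sup>2 = 20 * (320 * z\<^sup>2 + 80 * z + 5)"
      using Q by (simp add: power2_eq_square algebra_simps)
    then show ?thesis
      by simp
  qed
  show ?thesis
  proof (rule that[of "360 * z + 41" "36 * z + 5" "80 * z\<^sup>2 + 18 * z + 1"])
    show "(3 ^ (2 * (k + 1)) + 1) * d = 3 ^ (2 * k) + 1 + (3 ^ (4 * k) - 1) * (36 * z + 5)"
      unfolding assms(2) E N d Q by (simp add: power2_eq_square algebra_simps)
    show "coprime (360 * z + 41) (3 ^ (4 * k) - 1)"
      unfolding N by (rule coprime_half_exponent)
  qed (fact E, fact N, simp)
qed

lemma correlation_as_exponential_sum:
  fixes \<alpha> :: "'a::{field,finite}"
  assumes card: "card (UNIV::'a set) = 3 ^ n" and "primitive_elem \<alpha>" and "d > 0"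
  shows "(\<Sum>t<3 ^ n - 1. omega powi (int (gf3_val (abs_tr n (\<alpha> ^ (t + \<tau>))))
                                  - int (gf3_val (abs_tr n (\<alpha> ^ (d * t))))))
         = -1 + (\<Sum>x\<in>UNIV. omega ^ gf3_val (abs_tr n (\<alpha> ^ \<tau> * x - x ^ d)))"
proof -
  define H where "H x = omega ^ gf3_val (abs_tr n (\<alpha> ^ \<tau> * x - x ^ d))" for x :: 'a
  have char: "CHAR('a) = 3"
    by (rule char_eq_3_if_card[OF card])
  have "(-1::'a) \<noteq> 1"
    using char of_nat_eq_0_iff_char_dvd[of 2, where 'a='a] by (auto simp: eq_neg_iff_add_eq_0)
  then have "\<alpha> \<noteq> 0"
    using primitive_elem_nonzero[OF assms(2), of "-1"] by simp
  have trace_in_prime_field: "abs_tr n y ^ 3 = abs_tr n y" for y :: 'a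
    using abs_tr_cube[OF char] power_card[of y] card by simp
  have summand: "omega powi (int (gf3_val (abs_tr n (\<alpha> ^ (t + \<tau>))))
                  - int (gf3_val (abs_tr n (\<alpha> ^ (d * t))))) = H (\<alpha> ^ t)" for t
    unfolding H_def
    by (simp add: omega_gf3_diff[OF char trace_in_prime_field trace_in_prime_field]
        abs_tr_diff[OF char] power_add mult.commute flip: power_mult)
  have "abs_tr n (0::'a) = 0"
    by (simp add: abs_tr_def zero_power)
  then have "H 0 = 1"
    using \<open>d > 0\<close> gf3_val_of_int[OF char, of 0] by (simp add: H_def zero_power)
  then show ?thesis
    using sum_via_primitive_powers[OF assms(2) \<open>\<alpha> \<noteq> 0\<close>, of H] card
    by (simp add: summand H_def)
qed

lemma quadratic_substitution_sums:
  fixes \<alpha> r a :: "'a::{field,finite}" and H :: "'a \<Rightarrow> 'b::comm_semiring_1"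
  assumes "primitive_elem \<alpha>" and "\<not> (\<exists>y. y\<^sup>2 = r)"
    and "E = 2 * e" and "e > 0" and "coprime e (card (UNIV::'a set) - 1)"
    and exponents: "\<And>x::'a. (x ^ E) ^ d = x ^ D"
  shows "2 * (\<Sum>x\<in>UNIV. H (a * x - x ^ d))
         = (\<Sum>x\<in>UNIV. H (a * x ^ E - x ^ D)) + (\<Sum>x\<in>UNIV. H (a * r * x ^ E - r ^ d * x ^ D))"
proof -
  define f where "f y = H (a * y - y ^ d)" for y
  have square: "x ^ E = (x ^ e)\<^sup>2" for x :: 'a
    using assms(3) by (simp add: mult.commute flip: power_mult)
  have "(\<Sum>x\<in>UNIV. H (a * x ^ E - x ^ D)) = (\<Sum>x\<in>UNIV. f ((x ^ e)\<^sup>2))"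
    by (simp add: f_def square flip: exponents)
  also have "\<dots> = (\<Sum>y\<in>UNIV. f (y\<^sup>2))"
    using sum_reindex_coprime_power[OF assms(4,5), of "\<lambda>y. f (y\<^sup>2)"] .
  finally have first: "(\<Sum>x\<in>UNIV. H (a * x ^ E - x ^ D)) = (\<Sum>y\<in>UNIV. f (y\<^sup>2))" .
  have "(\<Sum>x\<in>UNIV. H (a * r * x ^ E - r ^ d * x ^ D)) = (\<Sum>x\<in>UNIV. f (r * (x ^ e)\<^sup>2))"
    by (simp add: f_def square power_mult_distrib mult.assoc flip: exponents)
  also have "\<dots> = (\<Sum>y\<in>UNIV. f (r * y\<^sup>2))"
    using sum_reindex_coprime_power[OF assms(4,5), of "\<lambda>y. f (r * y\<^sup>2)"] .
  finally show ?thesis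
    using first sum_square_classes[OF assms(1,2), of f] by (simp add: f_def)
qed

theorem lemma1:
  fixes \<alpha> r :: "'a::{field,finite}" and k n d \<tau> :: nat
  assumes "odd k"
    and "n = 4 * k"
    and "card (UNIV::'a set) = 3 ^ n"
    and "d = (3 ^ (2 * k) + 1) ^ 2 div 20"
    and "primitive_elem \<alpha>"
    and "\<tau> \<le> 3 ^ n - 2"
    and "r ^ (3 ^ 4) = r"
    and "\<not> (\<exists>y. y ^ (3 ^ 4) = y \<and> y ^ 2 = r)"
  shows "(let a = \<alpha> ^ \<tau>;
              s = (\<lambda>t. gf3_val (abs_tr n (\<alpha> ^ t)));
              C = (\<Sum>t<3 ^ n - 1. omega powi (int (s (t + \<tau>)) - int (s (d * t))));
              S = (\<Sum>x\<in>(UNIV::'a set). omega ^ gf3_val (abs_tr n (a * x - x ^ d)));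
              q1 = (\<lambda>x. gf3_val (abs_tr n (a * x ^ (3 ^ (2 * (k + 1)) + 1) - x ^ (3 ^ (2 * k) + 1))));
              q2 = (\<lambda>x. gf3_val (abs_tr n (a * r * x ^ (3 ^ (2 * (k + 1)) + 1)
                                            - r ^ d * x ^ (3 ^ (2 * k) + 1))))
          in C = -1 + S \<and>
             2 * S = (\<Sum>x\<in>(UNIV::'a set). omega ^ q1 x) + (\<Sum>x\<in>(UNIV::'a set). omega ^ q2 x))"
proof -
  obtain e c m :: nat where E: "3 ^ (2 * (k + 1)) + 1 = 2 * e" and unit: "coprime e (3 ^ (4 * k) - 1)"
    and inverse: "(3 ^ (2 * (k + 1)) + 1) * d = 3 ^ (2 * k) + 1 + (3 ^ (4 * k) - 1) * c"
    and order: "3 ^ (4 * k) - 1 = 80 * m" and "odd m"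
    by (rule exponent_arithmetic[OF assms(1,4)])
  have card_minus_one: "card (UNIV::'a set) - 1 = 3 ^ (4 * k) - 1"
    using assms(2,3) by simp
  have "d > 0"
    using inverse by (rule contrapos_pp) simp
  have "e > 0"
    using E by simp
  have exponents: "(x ^ (3 ^ (2 * (k + 1)) + 1)) ^ d = x ^ (3 ^ (2 * k) + 1)" for x :: 'a
  proof -
    have "(x ^ (3 ^ (2 * (k + 1)) + 1)) ^ d = x ^ (3 ^ (2 * k) + 1 + (card (UNIV::'a set) - 1) * c)"
      by (simp only: inverse card_minus_one flip: power_mult)
    also have "\<dots> = x ^ (3 ^ (2 * k) + 1)"
      by (rule power_add_card_multiple) simp
    finally show ?thesis .
  qed
  have "\<not> (\<exists>y. y\<^sup>2 = r)"
    using nonsquare_from_subfield[OF _ \<open>odd m\<close> assms(7,8)] card_minus_one order by simp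
  moreover have "coprime e (card (UNIV::'a set) - 1)"
    using unit card_minus_one by simp
  ultimately show ?thesis
    unfolding Let_def
    using correlation_as_exponential_sum[OF assms(3,5) \<open>d > 0\<close>, of \<tau>]
      quadratic_substitution_sums[OF assms(5) _ E \<open>e > 0\<close> _ exponents,
        where H = "\<lambda>z. omega ^ gf3_val (abs_tr n z)" and a = "\<alpha> ^ \<tau>" and r = r]
    by simp
qed

end
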